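(* Let $L$ be a precompact Hausdorff co-Heyting algebra, identified with its image in $\widehat L$. Then: (1) $L$ and $\widehat L$ have the same completely meet irreducible elements; (2) the maps $x\mapsto x^{\vee}=\bigwedge\{y\in L: y\not\le x\}$ and $x\mapsto x^{\wedge}=\bigvee\{y\in L: x\not\le y\}$ are well defined and are mutually inverse, order preserving bijections between $\mathcal I^{!\wedge}(L)$ and $\mathcal I^{!\vee}(L)$ (with $x\mapsto x^\vee$ going from $\mathcal I^{!\wedge}(L)$ to $\mathcal I^{!\vee}(L)$ and $x\mapsto x^\wedge$ going back); (3) for every $x\in\mathcal I^{!\wedge}(L)$, the cofoundation rank of $x$ in $\mathcal I^{!\wedge}(L)$ is finite; (4) $\mathcal I^{!\wedge}(L)$ satisfies the ascending chain condition; (5) every $a\in L$ is the complete meet of $\{x\in\mathcal I^{!\wedge}(L): a\le x\}$.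
   Context: A co-Heyting algebra is a bounded distributive lattice $(L,0,1,\vee,\wedge)$ such that $a-b=\min\{c\in L: a\le b\vee c\}$ exists for all $a,b$. For an ideal $I$, $L/I$ is the quotient by $a\equiv_I b\iff(a-b)\vee(b-a)\in I$. $\operatorname{Spec}L$ is the set of prime filters ordered by inclusion; height = foundation rank there; $\operatorname{codim}_La=\min\{\operatorname{height}\mathfrak p: a\in\mathfrak p\}$ ($+\infty$ if none); $dL=\{a:\operatorname{codim}_La\ge d\}$ is an ideal. $L$ is Hausdorff if every nonzero element has finite codimension; precompact if $L/dL$ is finite for every positive integer $d$. $\widehat L$ is the projective limit of the quotients $L/dL$ under the canonical surjections $L/(d+1)L\to L/dL$, with $L$ embedded diagonally. $x\ne0$ is completely join irreducible if $x\le\bigvee A$ implies $x\le a$ for some $a\in A$; $x\ne1$ is completely meet irreducible if $\bigwedge A\le x$ implies $a\le x$ for some $a\in A$. $\mathcal I^{!\vee}(L)$, $\mathcal I^{!\wedge}(L)$ denote the sets of completely join, resp. meet, irreducible elements. Cofoundation rank in an ordered set is the foundation rank for the reverse order. *)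

theory Defs
  imports Main
begin

definition is_cdiff :: "'a::{distrib_lattice,bounded_lattice} \<Rightarrow> 'a \<Rightarrow> 'a \<Rightarrow> bool" where
  "is_cdiff a b c \<longleftrightarrow> a \<le> sup b c \<and> (\<forall>c'. a \<le> sup b c' \<longrightarrow> c \<le> c')"

definition coheyting :: "'a::{distrib_lattice,bounded_lattice} itself \<Rightarrow> bool" where
  "coheyting _ \<longleftrightarrow> (\<forall>a b::'a. \<exists>c. is_cdiff a b c)"

definition cdiff :: "'a::{distrib_lattice,bounded_lattice} \<Rightarrow> 'a \<Rightarrow> 'a" where
  "cdiff a b = (THE c. is_cdiff a b c)"

definition qrel :: "'a::{distrib_lattice,bounded_lattice} set \<Rightarrow> ('a \<times> 'a) set" where
  "qrel I = {(a, b). sup (cdiff a b) (cdiff b a) \<in> I}"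

definition prime_filter :: "'a::{distrib_lattice,bounded_lattice} set \<Rightarrow> bool" where
  "prime_filter F \<longleftrightarrow> top \<in> F \<and> bot \<notin> F
     \<and> (\<forall>a b. a \<in> F \<longrightarrow> a \<le> b \<longrightarrow> b \<in> F)
     \<and> (\<forall>a b. a \<in> F \<longrightarrow> b \<in> F \<longrightarrow> inf a b \<in> F)
     \<and> (\<forall>a b. sup a b \<in> F \<longrightarrow> a \<in> F \<or> b \<in> F)"

definition Spec :: "'a::{distrib_lattice,bounded_lattice} set set" where
  "Spec = {F. prime_filter F}"

text \<open>Foundation rank: rank_le P lt x n means that x has foundation rank \<le> n
  in the strictly ordered set (P, lt).  (Foundation rank of x is the supremum of
  rank(y)+1 over y < x; it is a natural number \<le> n iff rank_le P lt x n.)\<close>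
fun rank_le :: "'b set \<Rightarrow> ('b \<Rightarrow> 'b \<Rightarrow> bool) \<Rightarrow> 'b \<Rightarrow> nat \<Rightarrow> bool" where
  "rank_le P lt x 0 \<longleftrightarrow> (\<forall>y\<in>P. \<not> lt y x)"
| "rank_le P lt x (Suc n) \<longleftrightarrow> (\<forall>y\<in>P. lt y x \<longrightarrow> rank_le P lt y n)"

definition finite_foundation_rank :: "'b set \<Rightarrow> ('b \<Rightarrow> 'b \<Rightarrow> bool) \<Rightarrow> 'b \<Rightarrow> bool" where
  "finite_foundation_rank P lt x \<longleftrightarrow> (\<exists>n. rank_le P lt x n)"

definition finite_cofoundation_rank :: "'b set \<Rightarrow> ('b \<Rightarrow> 'b \<Rightarrow> bool) \<Rightarrow> 'b \<Rightarrow> bool" where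
  "finite_cofoundation_rank P lt x \<longleftrightarrow> finite_foundation_rank P (\<lambda>u v. lt v u) x"

text \<open>height p \<ge> d in Spec (ordered by inclusion): p does not have height < d.
  A prime of infinite (or undefined) height counts as having height \<ge> every d.\<close>
definition height_ge :: "'a::{distrib_lattice,bounded_lattice} set \<Rightarrow> nat \<Rightarrow> bool" where
  "height_ge p d \<longleftrightarrow> (\<forall>n<d. \<not> rank_le Spec (\<subset>) p n)"

text \<open>codim a \<ge> d  iff every prime filter containing a has height \<ge> d
  (codim = +\<infinity> if no prime filter contains a).\<close>
definition codim_ge :: "'a::{distrib_lattice,bounded_lattice} \<Rightarrow> nat \<Rightarrow> bool" where
  "codim_ge a d \<longleftrightarrow> (\<forall>p\<in>Spec. a \<in> p \<longrightarrow> height_ge p d)"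

definition codim_finite :: "'a::{distrib_lattice,bounded_lattice} \<Rightarrow> bool" where
  "codim_finite a \<longleftrightarrow> (\<exists>p\<in>Spec. a \<in> p \<and> finite_foundation_rank Spec (\<subset>) p)"

definition dL :: "nat \<Rightarrow> 'a::{distrib_lattice,bounded_lattice} set" where
  "dL d = {a. codim_ge a d}"

definition hausdorff :: "'a::{distrib_lattice,bounded_lattice} itself \<Rightarrow> bool" where
  "hausdorff _ \<longleftrightarrow> (\<forall>a::'a. a \<noteq> bot \<longrightarrow> codim_finite a)"

definition precompact :: "'a::{distrib_lattice,bounded_lattice} itself \<Rightarrow> bool" where
  "precompact _ \<longleftrightarrow> (\<forall>d\<ge>1. finite ((UNIV::'a set) // qrel (dL d)))"

text \<open>An element of the projective limit is a compatible family of classes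
  f d \<in> L/dL (d \<ge> 1); the canonical surjection L/(d+1)L \<rightarrow> L/dL sends a class
  to the class containing it, so compatibility is f (d+1) \<subseteq> f d.  The unused
  index 0 is normalised to UNIV.\<close>
definition Lhat :: "(nat \<Rightarrow> 'a::{distrib_lattice,bounded_lattice} set) set" where
  "Lhat = {f. f 0 = UNIV \<and> (\<forall>d\<ge>1. f d \<in> UNIV // qrel (dL d) \<and> f (Suc d) \<subseteq> f d)}"

text \<open>Order of L/I: [a] \<le> [b] iff [a \<sqinter> b] = [a]; on \<widehat>L componentwise.\<close>
definition hle :: "(nat \<Rightarrow> 'a::{distrib_lattice,bounded_lattice} set) \<Rightarrow> (nat \<Rightarrow> 'a set) \<Rightarrow> bool" where
  "hle f g \<longleftrightarrow> (\<forall>d\<ge>1. \<forall>a\<in>f d. \<forall>b\<in>g d. (a, inf a b) \<in> qrel (dL d))"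

definition hemb :: "'a::{distrib_lattice,bounded_lattice} \<Rightarrow> nat \<Rightarrow> 'a set" where
  "hemb a = (\<lambda>d. if d = 0 then UNIV else qrel (dL d) `` {a})"

definition is_inf_in :: "'b set \<Rightarrow> ('b \<Rightarrow> 'b \<Rightarrow> bool) \<Rightarrow> 'b set \<Rightarrow> 'b \<Rightarrow> bool" where
  "is_inf_in P le A m \<longleftrightarrow> m \<in> P \<and> (\<forall>a\<in>A. le m a) \<and> (\<forall>z\<in>P. (\<forall>a\<in>A. le z a) \<longrightarrow> le z m)"

definition is_sup_in :: "'b set \<Rightarrow> ('b \<Rightarrow> 'b \<Rightarrow> bool) \<Rightarrow> 'b set \<Rightarrow> 'b \<Rightarrow> bool" where
  "is_sup_in P le A m \<longleftrightarrow> m \<in> P \<and> (\<forall>a\<in>A. le a m) \<and> (\<forall>z\<in>P. (\<forall>a\<in>A. le a z) \<longrightarrow> le m z)"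

definition Inf_in :: "'b set \<Rightarrow> ('b \<Rightarrow> 'b \<Rightarrow> bool) \<Rightarrow> 'b set \<Rightarrow> 'b" where
  "Inf_in P le A = (THE m. is_inf_in P le A m)"

definition Sup_in :: "'b set \<Rightarrow> ('b \<Rightarrow> 'b \<Rightarrow> bool) \<Rightarrow> 'b set \<Rightarrow> 'b" where
  "Sup_in P le A = (THE m. is_sup_in P le A m)"

definition cmi :: "'b set \<Rightarrow> ('b \<Rightarrow> 'b \<Rightarrow> bool) \<Rightarrow> 'b set" where
  "cmi P le = {x\<in>P. (\<exists>y\<in>P. \<not> le y x) \<and>
      (\<forall>A m. A \<subseteq> P \<longrightarrow> is_inf_in P le A m \<longrightarrow> le m x \<longrightarrow> (\<exists>a\<in>A. le a x))}"

definition cji :: "'b set \<Rightarrow> ('b \<Rightarrow> 'b \<Rightarrow> bool) \<Rightarrow> 'b set" where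
  "cji P le = {x\<in>P. (\<exists>y\<in>P. \<not> le x y) \<and>
      (\<forall>A m. A \<subseteq> P \<longrightarrow> is_sup_in P le A m \<longrightarrow> le x m \<longrightarrow> (\<exists>a\<in>A. le x a))}"

definition vee_map :: "'a::{distrib_lattice,bounded_lattice} \<Rightarrow> 'a" where
  "vee_map x = Inf_in UNIV (\<le>) {y. \<not> y \<le> x}"

definition wedge_map :: "'a::{distrib_lattice,bounded_lattice} \<Rightarrow> 'a" where
  "wedge_map x = Sup_in UNIV (\<le>) {y. \<not> x \<le> y}"

end

theory Submission
  imports Defs
begin

text \<open>
  In a co-Heyting algebra two elements are congruent modulo \<open>dL\<close> iff they lie in the same
  prime filters of height \<open>< d\<close>.  Precompactness therefore makes the set of primes of bounded
  height finite, and by the Hausdorff property every \<open>\<not> a \<le> b\<close> is witnessed by a prime of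
  finite height containing \<open>a\<close> but not \<open>b\<close>.  Joining resp. meeting over the finitely many
  primes of height at most one more than that of a given finite-height prime \<open>q\<close> shows that
  \<open>q\<close> is at the same time the complement of a principal ideal \<open>- {..x}\<close> and a principal
  filter \<open>{g..}\<close>.  The completely meet irreducible \<open>x\<close> are exactly those for which \<open>- {..x}\<close>
  is such a prime, the completely join irreducible \<open>g\<close> those for which \<open>{g..}\<close> is, and
  \<open>x \<mapsto> g\<close> is the bijection of (2); heights of these primes bound the cofoundation ranks in
  (3) and (4).  Finally an element of \<open>\<widehat>L\<close> is determined by the up-closed set of
  finite-height primes it lies in, which transports the description of the completely meet
  irreducibles to \<open>\<widehat>L\<close>.
\<close>

section \<open>Foundation rank\<close>

lemma rank_le_subset:
  assumes "rank_le P (\<subset>) p n" "p' \<subseteq> p"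
  shows "rank_le P (\<subset>) p' n"
  using assms by (cases n) (auto dest: psubset_subset_trans)

lemma rank_le_Suc: "rank_le P lt x n \<Longrightarrow> rank_le P lt x (Suc n)"
  by (induction n arbitrary: x) auto

lemma rank_le_mono:
  assumes "rank_le P lt x n" "n \<le> m"
  shows "rank_le P lt x m"
  using assms(2) by (induction m rule: dec_induct) (simp_all only: assms(1) rank_le_Suc)

lemma ex_rank_le_exactly_below:
  assumes "p \<in> P" "rank_le P (\<subset>) p m" "\<not> rank_le P (\<subset>) p k"
  shows "\<exists>p'\<in>P. p' \<subseteq> p \<and> rank_le P (\<subset>) p' (Suc k) \<and> \<not> rank_le P (\<subset>) p' k"
  using assms
proof (induction m arbitrary: p)
  case 0
  then show ?case using rank_le_mono[of P "(\<subset>)" p 0 k] by auto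
next
  case (Suc m)
  show ?case
  proof (cases "rank_le P (\<subset>) p (Suc k)")
    case False
    then obtain y where y: "y \<in> P" "y \<subset> p" "\<not> rank_le P (\<subset>) y k" by auto
    with Suc.prems(2) have "rank_le P (\<subset>) y m" by auto
    from Suc.IH[OF y(1) this y(3)] y(2) show ?thesis by blast
  qed (use Suc.prems in auto)
qed

lemma rank_le_no_descending_chain:
  assumes "rank_le P lt (f 0) n" "\<forall>k. f k \<in> P" "\<forall>k. lt (f (Suc k)) (f k)"
  shows False
  using assms
proof (induction n arbitrary: f)
  case 0
  then show ?case by (metis rank_le.simps(1))
next
  case (Suc n)
  then have "rank_le P lt (f (Suc 0)) n" by simp
  with Suc.prems(2,3) show ?case using Suc.IH[of "\<lambda>k. f (Suc k)"] by simp
qed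

lemma not_height_ge_subset: "\<not> height_ge p d \<Longrightarrow> p' \<subseteq> p \<Longrightarrow> \<not> height_ge p' d"
  unfolding height_ge_def using rank_le_subset by blast

section \<open>Prime filters\<close>

lemma
  fixes p :: "'a::{distrib_lattice,bounded_lattice} set"
  assumes "p \<in> Spec"
  shows Spec_top: "top \<in> p"
    and Spec_bot: "bot \<notin> p"
    and Spec_upward: "a \<in> p \<Longrightarrow> a \<le> b \<Longrightarrow> b \<in> p"
    and Spec_inf: "a \<in> p \<Longrightarrow> b \<in> p \<Longrightarrow> inf a b \<in> p"
    and Spec_sup: "sup a b \<in> p \<Longrightarrow> a \<in> p \<or> b \<in> p"
  using assms unfolding Spec_def prime_filter_def by blast+

lemma Spec_inf_iff: "p \<in> Spec \<Longrightarrow> inf a b \<in> p \<longleftrightarrow> a \<in> p \<and> b \<in> p"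
  by (meson Spec_inf Spec_upward inf_le1 inf_le2)

lemma Spec_sup_iff: "p \<in> Spec \<Longrightarrow> sup a b \<in> p \<longleftrightarrow> a \<in> p \<or> b \<in> p"
  by (meson Spec_sup Spec_upward sup_ge1 sup_ge2)

lemma Spec_atLeast_subset_iff: "p \<in> Spec \<Longrightarrow> {g..} \<subseteq> p \<longleftrightarrow> g \<in> p"
  using Spec_upward by auto

lemma Spec_subset_not_below_iff: "p \<in> Spec \<Longrightarrow> p \<subseteq> - {..x} \<longleftrightarrow> x \<notin> p"
  using Spec_upward by auto

lemma atLeast_Spec_iff:
  "{g..} \<in> Spec \<longleftrightarrow> (g::'a::{distrib_lattice,bounded_lattice}) \<noteq> bot \<and> (\<forall>a b. g \<le> sup a b \<longrightarrow> g \<le> a \<or> g \<le> b)"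
  unfolding Spec_def prime_filter_def by (auto simp: bot_unique intro: order_trans)

lemma ex_in_all_not_in:
  fixes q :: "'a::{distrib_lattice,bounded_lattice} set"
  assumes "q \<in> Spec" "finite F" "F \<subseteq> {p \<in> Spec. \<not> p \<subseteq> q}"
  shows "\<exists>x. x \<notin> q \<and> (\<forall>p\<in>F. x \<in> p)"
  using assms(2,3)
proof (induction F rule: finite_induct)
  case empty then show ?case using Spec_bot[OF assms(1)] by blast
next
  case (insert p F)
  then obtain x where x: "x \<notin> q" "\<forall>p'\<in>F. x \<in> p'" by auto
  from insert.prems obtain t where "t \<in> p" "t \<notin> q" "p \<in> Spec" by auto
  with x insert.prems have "sup x t \<notin> q \<and> (\<forall>p'\<in>insert p F. sup x t \<in> p')"
    by (auto simp: Spec_sup_iff assms(1))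
  then show ?case by blast
qed

lemma ex_in_not_in_any:
  fixes q :: "'a::{distrib_lattice,bounded_lattice} set"
  assumes "q \<in> Spec" "finite G" "G \<subseteq> {p \<in> Spec. p \<subset> q}"
  shows "\<exists>a. a \<in> q \<and> (\<forall>p\<in>G. a \<notin> p)"
  using assms(2,3)
proof (induction G rule: finite_induct)
  case empty then show ?case using Spec_top[OF assms(1)] by blast
next
  case (insert p G)
  then obtain a where a: "a \<in> q" "\<forall>p'\<in>G. a \<notin> p'" by auto
  from insert.prems obtain e where "e \<in> q" "e \<notin> p" "p \<in> Spec" by auto
  with a insert.prems have "inf a e \<in> q \<and> (\<forall>p'\<in>insert p G. inf a e \<notin> p')"
    by (auto simp: Spec_inf_iff assms(1))
  then show ?case by blast
qed

definition lattice_filter :: "'a::{distrib_lattice,bounded_lattice} set \<Rightarrow> bool" where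
  "lattice_filter F \<longleftrightarrow> top \<in> F \<and> (\<forall>a b. a \<in> F \<longrightarrow> a \<le> b \<longrightarrow> b \<in> F)
     \<and> (\<forall>a b. a \<in> F \<longrightarrow> b \<in> F \<longrightarrow> inf a b \<in> F)"

definition lattice_ideal :: "'a::{distrib_lattice,bounded_lattice} set \<Rightarrow> bool" where
  "lattice_ideal I \<longleftrightarrow> bot \<in> I \<and> (\<forall>a b. b \<in> I \<longrightarrow> a \<le> b \<longrightarrow> a \<in> I)
     \<and> (\<forall>a b. a \<in> I \<longrightarrow> b \<in> I \<longrightarrow> sup a b \<in> I)"

lemma lattice_filter_adjoin:
  assumes "lattice_filter G"
  shows "lattice_filter {z. \<exists>g\<in>G. inf g x \<le> z}"
  unfolding lattice_filter_def
proof (intro conjI allI impI)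
  show "top \<in> {z. \<exists>g\<in>G. inf g x \<le> z}" using assms unfolding lattice_filter_def by auto
next
  fix a b assume "a \<in> {z. \<exists>g\<in>G. inf g x \<le> z}" "a \<le> b"
  then show "b \<in> {z. \<exists>g\<in>G. inf g x \<le> z}" by (auto intro: order_trans)
next
  fix a b assume "a \<in> {z. \<exists>g\<in>G. inf g x \<le> z}" "b \<in> {z. \<exists>g\<in>G. inf g x \<le> z}"
  then obtain g g' where g: "g \<in> G" "g' \<in> G" "inf g x \<le> a" "inf g' x \<le> b" by blast
  have "inf (inf g g') x \<le> inf a b"
    using g(3,4) by (meson inf_le1 inf_le2 le_inf_iff order_trans)
  moreover have "inf g g' \<in> G" using assms g(1,2) unfolding lattice_filter_def by blast
  ultimately show "inf a b \<in> {z. \<exists>g\<in>G. inf g x \<le> z}" by blast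
qed

lemma maximal_disjoint_filter_prime:
  assumes G: "lattice_filter G" and I: "lattice_ideal I" and GI: "G \<inter> I = {}"
    and max: "\<And>H. lattice_filter H \<Longrightarrow> G \<subseteq> H \<Longrightarrow> H \<inter> I = {} \<Longrightarrow> H = G"
  shows "prime_filter G"
proof -
  have I_down: "a \<in> I" if "b \<in> I" "a \<le> b" for a b using I that unfolding lattice_ideal_def by blast
  have escape: "\<exists>g\<in>G. inf g x \<in> I" if "x \<notin> G" for x
  proof (rule ccontr)
    assume "\<not> ?thesis"
    then have "{z. \<exists>g\<in>G. inf g x \<le> z} \<inter> I = {}" using I_down by blast
    moreover have "G \<subseteq> {z. \<exists>g\<in>G. inf g x \<le> z}" by (auto intro: le_infI1)
    ultimately have "{z. \<exists>g\<in>G. inf g x \<le> z} = G" using max lattice_filter_adjoin[OF G] by blast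
    moreover have "x \<in> {z. \<exists>g\<in>G. inf g x \<le> z}" using G unfolding lattice_filter_def by force
    ultimately show False using \<open>x \<notin> G\<close> by blast
  qed
  have "x \<in> G \<or> y \<in> G" if xy: "sup x y \<in> G" for x y
  proof (rule ccontr)
    assume "\<not> ?thesis"
    then obtain g g' where g: "g \<in> G" "g' \<in> G" "inf g x \<in> I" "inf g' y \<in> I" using escape by blast
    have "inf (inf g g') (sup x y) = sup (inf (inf g g') x) (inf (inf g g') y)"
      by (rule inf_sup_distrib1)
    also have "\<dots> \<le> sup (inf g x) (inf g' y)" by (intro sup_mono inf_mono) simp_all
    finally have "inf (inf g g') (sup x y) \<le> sup (inf g x) (inf g' y)" .
    moreover have "sup (inf g x) (inf g' y) \<in> I" using I g unfolding lattice_ideal_def by blast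
    moreover have "inf (inf g g') (sup x y) \<in> G" using G g xy unfolding lattice_filter_def by blast
    ultimately show False using GI I_down by blast
  qed
  moreover have "bot \<notin> G" using GI I unfolding lattice_ideal_def by blast
  ultimately show ?thesis using G unfolding prime_filter_def lattice_filter_def by blast
qed

lemma ex_prime_filter_disjoint:
  assumes F: "lattice_filter F" and I: "lattice_ideal I" and FI: "F \<inter> I = {}"
  shows "\<exists>G. prime_filter G \<and> F \<subseteq> G \<and> G \<inter> I = {}"
proof -
  define \<A> where "\<A> = {G. lattice_filter G \<and> F \<subseteq> G \<and> G \<inter> I = {}}"
  have "\<exists>G\<in>\<A>. \<forall>H\<in>\<A>. G \<subseteq> H \<longrightarrow> H = G"
  proof (rule subset_Zorn_nonempty)
    show "\<A> \<noteq> {}" using F FI unfolding \<A>_def by blast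
  next
    fix \<C> assume \<C>: "\<C> \<noteq> {}" "subset.chain \<A> \<C>"
    then have filters: "\<And>C. C \<in> \<C> \<Longrightarrow> lattice_filter C \<and> F \<subseteq> C \<and> C \<inter> I = {}"
      and linear: "\<And>A B. A \<in> \<C> \<Longrightarrow> B \<in> \<C> \<Longrightarrow> A \<subseteq> B \<or> B \<subseteq> A"
      unfolding subset_chain_def \<A>_def by blast+
    have "inf a b \<in> \<Union>\<C>" if "a \<in> \<Union>\<C>" "b \<in> \<Union>\<C>" for a b
    proof -
      from that obtain A B where AB: "A \<in> \<C>" "B \<in> \<C>" "a \<in> A" "b \<in> B" by blast
      with linear have "a \<in> A \<and> b \<in> A \<or> a \<in> B \<and> b \<in> B" by blast
      with AB(1,2) filters show ?thesis unfolding lattice_filter_def by blast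
    qed
    moreover have "top \<in> \<Union>\<C>" "F \<subseteq> \<Union>\<C>" "\<Union>\<C> \<inter> I = {}"
      using \<C>(1) filters unfolding lattice_filter_def by blast+
    moreover have "b \<in> \<Union>\<C>" if "a \<in> \<Union>\<C>" "a \<le> b" for a b
      using that filters unfolding lattice_filter_def by blast
    ultimately show "\<Union>\<C> \<in> \<A>" unfolding \<A>_def lattice_filter_def by blast
  qed
  then obtain G where G: "lattice_filter G" "F \<subseteq> G" "G \<inter> I = {}"
    and max: "\<And>H. lattice_filter H \<Longrightarrow> G \<subseteq> H \<Longrightarrow> H \<inter> I = {} \<Longrightarrow> H = G"
    unfolding \<A>_def by (metis (mono_tags, lifting) mem_Collect_eq order_trans)
  then show ?thesis using maximal_disjoint_filter_prime[OF G(1) I G(3) max] by blast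
qed

section \<open>The co-Heyting difference and the congruences modulo \<open>dL\<close>\<close>

locale coheyting_algebra =
  fixes L :: "'a::{distrib_lattice,bounded_lattice} itself"
  assumes coheyting: "coheyting L"
begin

lemma is_cdiff_cdiff: "is_cdiff (a::'a) b (cdiff a b)"
proof -
  obtain c where c: "is_cdiff a b c" using coheyting unfolding coheyting_def by blast
  moreover have "c' = c" if "is_cdiff a b c'" for c'
    using c that unfolding is_cdiff_def by (meson order.antisym)
  ultimately show ?thesis unfolding cdiff_def by (metis theI)
qed

lemma le_sup_cdiff: "(a::'a) \<le> sup b (cdiff a b)"
  using is_cdiff_cdiff unfolding is_cdiff_def by blast

lemma cdiff_le_iff: "cdiff (a::'a) b \<le> c \<longleftrightarrow> a \<le> sup b c"
proof
  assume "cdiff a b \<le> c"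
  then have "sup b (cdiff a b) \<le> sup b c" by (intro sup_mono order_refl)
  with le_sup_cdiff show "a \<le> sup b c" by (rule order_trans)
qed (use is_cdiff_cdiff in \<open>auto simp: is_cdiff_def\<close>)

lemma Spec_cdiff:
  assumes "p \<in> Spec" "(a::'a) \<in> p" "b \<notin> p"
  shows "cdiff a b \<in> p"
proof -
  have "sup b (cdiff a b) \<in> p" using Spec_upward[OF assms(1,2) le_sup_cdiff] .
  with assms(1,3) show ?thesis by (simp add: Spec_sup_iff)
qed

lemma Spec_separating_below:
  assumes p: "p \<in> Spec" and ab: "cdiff (a::'a) b \<in> p"
  shows "\<exists>p'\<in>Spec. p' \<subseteq> p \<and> a \<in> p' \<and> b \<notin> p'"
proof -
  define I where "I = {y. \<exists>w. w \<notin> p \<and> y \<le> sup b w}"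
  have "sup y y' \<in> I" if "y \<in> I" "y' \<in> I" for y y'
  proof -
    from that obtain w w' where w: "w \<notin> p" "w' \<notin> p" "y \<le> sup b w" "y' \<le> sup b w'"
      unfolding I_def by blast
    have "sup b w \<le> sup b (sup w w')" "sup b w' \<le> sup b (sup w w')"
      by (simp_all add: le_supI2)
    with w(3,4) have "sup y y' \<le> sup b (sup w w')" by (meson le_supI order_trans)
    moreover have "sup w w' \<notin> p" using w(1,2) by (simp add: Spec_sup_iff[OF p])
    ultimately show ?thesis unfolding I_def by blast
  qed
  then have "lattice_ideal I"
    unfolding lattice_ideal_def I_def using Spec_bot[OF p] by (blast intro: order_trans bot_least)
  moreover have "lattice_filter {a..}" unfolding lattice_filter_def by auto
  moreover have "{a..} \<inter> I = {}"
  proof -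
    have "w \<in> p" if "a \<le> sup b w" for w
      using that Spec_upward[OF p ab] cdiff_le_iff by blast
    then show ?thesis unfolding I_def by (auto dest: order_trans)
  qed
  ultimately obtain G where G: "prime_filter G" "{a..} \<subseteq> G" "G \<inter> I = {}"
    using ex_prime_filter_disjoint by blast
  have "z \<in> I" if "z \<notin> p" for z using that unfolding I_def by (blast intro: sup_ge2)
  then have "G \<subseteq> p" using G(3) by blast
  moreover have "b \<in> I" unfolding I_def using Spec_bot[OF p] by force
  ultimately show ?thesis using G unfolding Spec_def by auto
qed

lemma qrel_dL_iff:
  "((u::'a), v) \<in> qrel (dL d) \<longleftrightarrow> (\<forall>p\<in>Spec. \<not> height_ge p d \<longrightarrow> (u \<in> p \<longleftrightarrow> v \<in> p))"
proof -
  have separated: "\<exists>p'\<in>Spec. \<not> height_ge p' d \<and> u \<in> p' \<and> v \<notin> p'"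
    if "p \<in> Spec" "\<not> height_ge p d" "cdiff u v \<in> p" for p and u v :: 'a
    using Spec_separating_below[OF that(1,3)] not_height_ge_subset[OF that(2)] by blast
  have "(u, v) \<in> qrel (dL d) \<longleftrightarrow>
      (\<forall>p\<in>Spec. sup (cdiff u v) (cdiff v u) \<in> p \<longrightarrow> height_ge p d)"
    unfolding qrel_def dL_def codim_ge_def by simp
  also have "\<dots> \<longleftrightarrow> (\<forall>p\<in>Spec. \<not> height_ge p d \<longrightarrow> (u \<in> p \<longleftrightarrow> v \<in> p))"
    using separated Spec_cdiff Spec_sup_iff by metis
  finally show ?thesis .
qed

lemma qrel_dL_refl: "((u::'a), u) \<in> qrel (dL d)"
  by (simp add: qrel_dL_iff)

lemma qrel_dL_Suc: "((u::'a), v) \<in> qrel (dL (Suc d)) \<Longrightarrow> (u, v) \<in> qrel (dL d)"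
  unfolding qrel_dL_iff height_ge_def by (meson less_SucI)

lemma qrel_dL_class_Spec_iff:
  assumes "q \<in> Spec" "\<not> height_ge q d" "v \<in> qrel (dL d) `` {c}"
  shows "v \<in> q \<longleftrightarrow> (c::'a) \<in> q"
  using assms qrel_dL_iff by blast

lemma qrel_dL_class_subset_Spec_iff:
  assumes "q \<in> Spec" "\<not> height_ge q d"
  shows "qrel (dL d) `` {c} \<subseteq> q \<longleftrightarrow> (c::'a) \<in> q"
  using qrel_dL_class_Spec_iff[OF assms] qrel_dL_refl by blast

end

section \<open>Primes of finite height\<close>

definition Spec_fin :: "'a::{distrib_lattice,bounded_lattice} set set" where
  "Spec_fin = {q \<in> Spec. finite_foundation_rank Spec (\<subset>) q}"

definition height :: "'a::{distrib_lattice,bounded_lattice} set \<Rightarrow> nat" where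
  "height q = (LEAST n. rank_le Spec (\<subset>) q n)"

lemma rank_le_height: "q \<in> Spec_fin \<Longrightarrow> rank_le Spec (\<subset>) q (height q)"
  unfolding Spec_fin_def finite_foundation_rank_def height_def by (blast intro: LeastI_ex)

lemma height_ge_iff:
  assumes "q \<in> Spec_fin"
  shows "height_ge q d \<longleftrightarrow> d \<le> height q"
proof
  assume "height_ge q d"
  then show "d \<le> height q" using rank_le_height[OF assms] unfolding height_ge_def by (meson not_le)
next
  assume "d \<le> height q"
  then show "height_ge q d" unfolding height_ge_def height_def
    by (meson not_less_Least order_less_le_trans)
qed

lemma Spec_fin_iff: "q \<in> Spec_fin \<longleftrightarrow> q \<in> Spec \<and> (\<exists>n. rank_le Spec (\<subset>) q n)"
  unfolding Spec_fin_def finite_foundation_rank_def by blast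

lemma not_height_ge_iff:
  assumes "q \<in> Spec"
  shows "\<not> height_ge q d \<longleftrightarrow> q \<in> Spec_fin \<and> height q < d"
proof
  assume "\<not> height_ge q d"
  then obtain n where "n < d" "rank_le Spec (\<subset>) q n" unfolding height_ge_def by blast
  moreover from this(2) have "height q \<le> n" unfolding height_def by (rule Least_le)
  ultimately show "q \<in> Spec_fin \<and> height q < d" using assms unfolding Spec_fin_iff by auto
qed (simp add: height_ge_iff)

lemma Spec_fin_downward: "p \<in> Spec_fin \<Longrightarrow> q \<in> Spec \<Longrightarrow> q \<subseteq> p \<Longrightarrow> q \<in> Spec_fin"
  unfolding Spec_fin_iff using rank_le_subset by blast

locale precompact_hausdorff_coheyting = coheyting_algebra L
  for L :: "'a::{distrib_lattice,bounded_lattice} itself" +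
  assumes precompact: "precompact L" and hausdorff: "hausdorff L"
begin

lemma finite_Spec_not_height_ge: "finite {p \<in> (Spec :: 'a set set). \<not> height_ge p d}"
proof (cases "d = 0")
  case True
  then show ?thesis by (simp add: height_ge_def)
next
  case False
  define Q where "Q = (UNIV :: 'a set) // qrel (dL d)"
  have "finite Q" using precompact False unfolding precompact_def Q_def by simp
  have "p = \<Union>{C \<in> Q. C \<subseteq> p}" if "p \<in> Spec" "\<not> height_ge p d" for p :: "'a set"
  proof
    show "p \<subseteq> \<Union>{C \<in> Q. C \<subseteq> p}"
    proof
      fix x assume "x \<in> p"
      then have "qrel (dL d) `` {x} \<subseteq> p"
        using \<open>p \<in> Spec\<close> \<open>\<not> height_ge p d\<close> qrel_dL_iff by blast
      moreover have "qrel (dL d) `` {x} \<in> Q" unfolding Q_def by (rule quotientI) simp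
      moreover have "x \<in> qrel (dL d) `` {x}" using qrel_dL_refl by simp
      ultimately show "x \<in> \<Union>{C \<in> Q. C \<subseteq> p}" by blast
    qed
  qed blast
  then have "{p \<in> Spec. \<not> height_ge p d} \<subseteq> Union ` Pow Q" by blast
  with \<open>finite Q\<close> show ?thesis by (meson finite_Pow_iff finite_imageI finite_subset)
qed

lemma finite_Spec_rank_le: "finite {p \<in> (Spec :: 'a set set). rank_le Spec (\<subset>) p n}"
  by (rule finite_subset[OF _ finite_Spec_not_height_ge[of "Suc n"]]) (auto simp: height_ge_def)

lemma ex_Spec_fin_separating:
  assumes "\<not> (a::'a) \<le> b"
  shows "\<exists>p\<in>Spec_fin. a \<in> p \<and> b \<notin> p"
proof -
  have "\<not> cdiff a b \<le> bot" using assms by (simp add: cdiff_le_iff)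
  then have "codim_finite (cdiff a b)" using hausdorff unfolding hausdorff_def by simp
  then obtain p n where p: "p \<in> Spec" "cdiff a b \<in> p" "rank_le Spec (\<subset>) p n"
    unfolding codim_finite_def finite_foundation_rank_def by blast
  obtain p' where p': "p' \<in> Spec" "p' \<subseteq> p" "a \<in> p'" "b \<notin> p'"
    using Spec_separating_below[OF p(1,2)] by blast
  have "p \<in> Spec_fin" using p(1,3) unfolding Spec_fin_iff by blast
  with p' show ?thesis using Spec_fin_downward by blast
qed

lemma Spec_fin_eq_not_below:
  assumes q: "q \<in> Spec_fin"
  shows "\<exists>x::'a. q = - {..x}"
proof -
  define n where "n = height q"
  have qS: "q \<in> Spec" using q unfolding Spec_fin_def by blast
  have r: "rank_le Spec (\<subset>) q n" unfolding n_def by (rule rank_le_height[OF q])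
  define F where "F = {p \<in> Spec. rank_le Spec (\<subset>) p (Suc n) \<and> \<not> p \<subseteq> q}"
  have "finite F" unfolding F_def by (rule finite_subset[OF _ finite_Spec_rank_le]) blast
  moreover have "F \<subseteq> {p \<in> Spec. \<not> p \<subseteq> q}" unfolding F_def by blast
  ultimately obtain x where x: "x \<notin> q" "\<forall>p\<in>F. x \<in> p"
    using ex_in_all_not_in[OF qS] by blast
  have below: "y \<le> x" if "y \<notin> q" for y
  proof (rule ccontr)
    assume "\<not> y \<le> x"
    then obtain p where p: "p \<in> Spec_fin" "y \<in> p" "x \<notin> p"
      using ex_Spec_fin_separating by blast
    then obtain m where pS: "p \<in> Spec" and m: "rank_le Spec (\<subset>) p m" unfolding Spec_fin_iff by blast
    have pq: "\<not> p \<subseteq> q" using p(2) \<open>y \<notin> q\<close> by blast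
    show False
    proof (cases "rank_le Spec (\<subset>) p n")
      case True
      then have "p \<in> F" unfolding F_def using pS pq rank_le_Suc[OF True] by blast
      with x p(3) show False by blast
    next
      case False
      txt \<open>Shrink \<open>p\<close> to rank exactly \<open>n + 1\<close>; it stays outside \<open>q\<close>, whose subsets have rank \<open>\<le> n\<close>.\<close>
      then obtain p' where p': "p' \<in> Spec" "p' \<subseteq> p" "rank_le Spec (\<subset>) p' (Suc n)"
          "\<not> rank_le Spec (\<subset>) p' n"
        using ex_rank_le_exactly_below[OF pS m] by blast
      have "\<not> p' \<subseteq> q" using p'(4) rank_le_subset[OF r] by blast
      then have "p' \<in> F" unfolding F_def using p'(1,3) by blast
      with x p(3) p'(2) show False by blast
    qed
  qed
  have "q = - {..x}"
  proof (intro set_eqI iffI)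
    fix y assume "y \<in> q"
    then show "y \<in> - {..x}" using x(1) Spec_upward[OF qS] by auto
  qed (use below in auto)
  then show ?thesis ..
qed

lemma Spec_fin_eq_atLeast:
  assumes q: "q \<in> Spec_fin"
  shows "\<exists>g::'a. q = {g..}"
proof -
  define n where "n = height q"
  have qS: "q \<in> Spec" using q unfolding Spec_fin_def by blast
  have r: "rank_le Spec (\<subset>) q n" unfolding n_def by (rule rank_le_height[OF q])
  define G where "G = {p \<in> Spec. rank_le Spec (\<subset>) p n \<and> p \<subset> q}"
  have "finite G" unfolding G_def by (rule finite_subset[OF _ finite_Spec_rank_le]) blast
  moreover have "G \<subseteq> {p \<in> Spec. p \<subset> q}" unfolding G_def by blast
  ultimately obtain a where a: "a \<in> q" "\<forall>p\<in>G. a \<notin> p"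
    using ex_in_not_in_any[OF qS] by blast
  obtain x where x: "q = - {..x}" using Spec_fin_eq_not_below[OF q] by blast
  define g where "g = cdiff a x"
  have "x \<notin> q" using x by simp
  then have "g \<in> q" unfolding g_def by (rule Spec_cdiff[OF qS a(1)])
  moreover have least: "g \<le> y" if "y \<in> q" for y
  proof (rule ccontr)
    assume "\<not> g \<le> y"
    then obtain p where p: "p \<in> Spec_fin" "g \<in> p" "y \<notin> p"
      using ex_Spec_fin_separating by blast
    then obtain p' where p': "p' \<in> Spec" "p' \<subseteq> p" "a \<in> p'" "x \<notin> p'"
      using Spec_separating_below[of p a x] unfolding g_def Spec_fin_def by blast
    have "p' \<subseteq> q" using x p'(4) Spec_subset_not_below_iff[OF p'(1)] by blast
    with \<open>y \<in> q\<close> p(3) p'(2) have "p' \<subset> q" by blast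
    then have "p' \<in> G" unfolding G_def using p'(1) rank_le_subset[OF r \<open>p' \<subseteq> q\<close>] by blast
    with a(2) p'(3) show False by blast
  qed
  ultimately have "q = {g..}"
    using Spec_atLeast_subset_iff[OF qS, of g] least by blast
  then show ?thesis ..
qed

end

section \<open>Splitting pairs and completely irreducible elements\<close>

lemma Inf_in_UNIV_eq: "is_inf_in (UNIV::'a::order set) (\<le>) A m \<Longrightarrow> Inf_in UNIV (\<le>) A = m"
  unfolding Inf_in_def by (rule the_equality) (auto simp: is_inf_in_def intro: order.antisym)

lemma Sup_in_UNIV_eq: "is_sup_in (UNIV::'a::order set) (\<le>) A m \<Longrightarrow> Sup_in UNIV (\<le>) A = m"
  unfolding Sup_in_def by (rule the_equality) (auto simp: is_sup_in_def intro: order.antisym)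

lemma is_inf_in_not_below: "{g..} = - {..x} \<Longrightarrow> is_inf_in UNIV (\<le>) {y. \<not> y \<le> x} (g::'a::order)"
  unfolding is_inf_in_def by (metis (mono_tags) ComplD ComplI atLeast_iff atMost_iff
      mem_Collect_eq order_refl UNIV_I)

lemma is_sup_in_not_above: "{g..} = - {..x} \<Longrightarrow> is_sup_in UNIV (\<le>) {y. \<not> g \<le> y} (x::'a::order)"
  unfolding is_sup_in_def by (metis (mono_tags) ComplD ComplI atLeast_iff atMost_iff
      mem_Collect_eq order_refl UNIV_I)

lemma vee_map_eq: "{g..} = - {..x} \<Longrightarrow> vee_map x = g"
  unfolding vee_map_def by (intro Inf_in_UNIV_eq is_inf_in_not_below)

lemma wedge_map_eq: "{g..} = - {..x} \<Longrightarrow> wedge_map g = x"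
  unfolding wedge_map_def by (intro Sup_in_UNIV_eq is_sup_in_not_above)

text \<open>\<open>{g..} = - {..x}\<close> says that \<open>(g, x)\<close> is a splitting pair: every element lies either
  above \<open>g\<close> or below \<open>x\<close>, and not both.\<close>

lemma splitting_le_iff:
  fixes x x' g g' :: "'a::order"
  assumes "{g..} = - {..x}" "{g'..} = - {..x'}"
  shows "x \<le> x' \<longleftrightarrow> g \<le> g'"
proof -
  have "x \<le> x' \<longleftrightarrow> - {..x'} \<subseteq> - {..x}" by (auto intro: order_trans)
  also have "\<dots> \<longleftrightarrow> g \<le> g'" using assms by (auto intro: order_trans)
  finally show ?thesis .
qed

context precompact_hausdorff_coheyting
begin

lemma is_inf_in_Spec_fin_above: "is_inf_in UNIV (\<le>) {x. - {..x} \<in> Spec_fin \<and> (a::'a) \<le> x} a"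
  unfolding is_inf_in_def
proof (intro conjI ballI impI)
  fix z assume lower: "\<forall>x\<in>{x. - {..x} \<in> Spec_fin \<and> a \<le> x}. z \<le> x"
  show "z \<le> a"
  proof (rule ccontr)
    assume "\<not> z \<le> a"
    then obtain p where p: "p \<in> Spec_fin" "z \<in> p" "a \<notin> p" using ex_Spec_fin_separating by blast
    then obtain x where x: "p = - {..x}" using Spec_fin_eq_not_below by blast
    with p lower have "z \<le> x" by auto
    with p(2) x show False by auto
  qed
qed auto

lemma cmi_iff: "(x::'a) \<in> cmi UNIV (\<le>) \<longleftrightarrow> - {..x} \<in> Spec_fin"
proof
  assume "x \<in> cmi UNIV (\<le>)"
  then obtain x' where "- {..x'} \<in> Spec_fin" "x \<le> x'" "x' \<le> x"
    using is_inf_in_Spec_fin_above[of x] unfolding cmi_def by blast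
  then show "- {..x} \<in> Spec_fin" using order.antisym by blast
next
  assume F: "- {..x} \<in> Spec_fin"
  then obtain g where g: "{g..} = - {..x}" using Spec_fin_eq_atLeast by metis
  have "top \<in> - {..x}" using F Spec_top unfolding Spec_fin_def by blast
  moreover have "\<exists>a\<in>A. a \<le> x" if "is_inf_in UNIV (\<le>) A m" "m \<le> x" for A m
  proof (rule ccontr)
    assume "\<not> ?thesis"
    then have "\<forall>a\<in>A. g \<le> a" using g by (auto simp: set_eq_iff)
    then have "g \<le> m" using that(1) unfolding is_inf_in_def by blast
    with that(2) g show False by auto
  qed
  ultimately show "x \<in> cmi UNIV (\<le>)" unfolding cmi_def by auto
qed

lemma cji_iff: "(g::'a) \<in> cji UNIV (\<le>) \<longleftrightarrow> {g..} \<in> Spec_fin"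
proof
  assume gJ: "g \<in> cji UNIV (\<le>)"
  then have "g \<noteq> bot" unfolding cji_def by auto
  moreover have "g \<le> a \<or> g \<le> b" if "g \<le> sup a b" for a b
  proof -
    have "is_sup_in UNIV (\<le>) {a, b} (sup a b)" unfolding is_sup_in_def by auto
    with gJ that show ?thesis unfolding cji_def by blast
  qed
  ultimately have US: "{g..} \<in> Spec" by (simp add: atLeast_Spec_iff)
  from \<open>g \<noteq> bot\<close> obtain p where p: "p \<in> Spec_fin" "g \<in> p"
    using ex_Spec_fin_separating[of g bot] by (auto simp: bot_unique)
  then have "{g..} \<subseteq> p" using Spec_atLeast_subset_iff unfolding Spec_fin_def by blast
  with US p(1) show "{g..} \<in> Spec_fin" using Spec_fin_downward by blast
next
  assume F: "{g..} \<in> Spec_fin"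
  then obtain x where x: "{g..} = - {..x}" using Spec_fin_eq_not_below by metis
  have "bot \<notin> {g..}" using F Spec_bot unfolding Spec_fin_def by blast
  moreover have "\<exists>a\<in>A. g \<le> a" if "is_sup_in UNIV (\<le>) A m" "g \<le> m" for A m
  proof (rule ccontr)
    assume "\<not> ?thesis"
    then have "\<forall>a\<in>A. a \<le> x" using x by (auto simp: set_eq_iff)
    then have "m \<le> x" using that(1) unfolding is_sup_in_def by blast
    with that(2) x show False by auto
  qed
  ultimately show "g \<in> cji UNIV (\<le>)" unfolding cji_def by auto
qed

lemma cmi_splitting: "(x::'a) \<in> cmi UNIV (\<le>) \<Longrightarrow> \<exists>g\<in>cji UNIV (\<le>). {g..} = - {..x}"
  using cmi_iff cji_iff Spec_fin_eq_atLeast by metis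

lemma cji_splitting: "(g::'a) \<in> cji UNIV (\<le>) \<Longrightarrow> \<exists>x\<in>cmi UNIV (\<le>). {g..} = - {..x}"
  using cmi_iff cji_iff Spec_fin_eq_not_below by metis

lemma rank_le_cmi_converse:
  "rank_le Spec (\<subset>) (- {..x}) n \<Longrightarrow> rank_le (cmi (UNIV::'a set) (\<le>)) (\<lambda>u v. v < u) x n"
  by (induction n arbitrary: x)
    (use cmi_iff in \<open>auto simp: Spec_fin_def less_le_not_le intro: order_trans\<close>)

lemma vee_map_cmi:
  assumes "(x::'a) \<in> cmi UNIV (\<le>)"
  shows "vee_map x \<in> cji UNIV (\<le>)" "{vee_map x..} = - {..x}"
  using cmi_splitting[OF assms] vee_map_eq by metis+

lemma wedge_map_cji:
  assumes "(g::'a) \<in> cji UNIV (\<le>)"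
  shows "wedge_map g \<in> cmi UNIV (\<le>)" "{g..} = - {..wedge_map g}"
  using cji_splitting[OF assms] wedge_map_eq by metis+

lemma finite_cofoundation_rank_cmi:
  "(x::'a) \<in> cmi UNIV (\<le>) \<Longrightarrow> finite_cofoundation_rank (cmi UNIV (\<le>)) (<) x"
  unfolding finite_cofoundation_rank_def finite_foundation_rank_def
  using cmi_iff rank_le_cmi_converse unfolding Spec_fin_iff by blast

lemma cmi_no_ascending_chain: "\<not> (\<exists>f::nat \<Rightarrow> 'a. (\<forall>n. f n \<in> cmi UNIV (\<le>)) \<and> (\<forall>n. f n < f (Suc n)))"
proof
  assume "\<exists>f::nat \<Rightarrow> 'a. (\<forall>n. f n \<in> cmi UNIV (\<le>)) \<and> (\<forall>n. f n < f (Suc n))"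
  then obtain f :: "nat \<Rightarrow> 'a" where f: "\<forall>n. f n \<in> cmi UNIV (\<le>)" "\<forall>n. f n < f (Suc n)" by blast
  then obtain n where "rank_le (cmi UNIV (\<le>)) (\<lambda>u v. v < u) (f 0) n"
    using finite_cofoundation_rank_cmi
    unfolding finite_cofoundation_rank_def finite_foundation_rank_def by blast
  from rank_le_no_descending_chain[of _ _ f, OF this] f show False by blast
qed

lemma is_inf_in_cmi_above: "is_inf_in UNIV (\<le>) {x \<in> cmi UNIV (\<le>). (a::'a) \<le> x} a"
  using is_inf_in_Spec_fin_above[of a] by (simp add: cmi_iff)

end

section \<open>The completion\<close>

text \<open>An element \<open>\<xi>\<close> of \<open>\<widehat>L\<close> lies in a prime \<open>q\<close> of finite height if its component at some,
  equivalently every, index \<open>d > height q\<close> is contained in \<open>q\<close>.\<close>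

definition primes_containing :: "(nat \<Rightarrow> 'a::{distrib_lattice,bounded_lattice} set) \<Rightarrow> 'a set set" where
  "primes_containing \<xi> = {q \<in> Spec_fin. \<xi> (Suc (height q)) \<subseteq> q}"

lemma primes_containing_subset: "primes_containing \<xi> \<subseteq> Spec_fin"
  unfolding primes_containing_def by blast

lemma Lhat_class:
  assumes "f \<in> Lhat" "1 \<le> d"
  shows "\<exists>c. f d = qrel (dL d) `` {c}"
proof -
  have "f d \<in> UNIV // qrel (dL d)" using assms unfolding Lhat_def by blast
  then show ?thesis by (rule quotientE) blast
qed

lemma Lhat_antimono:
  assumes f: "f \<in> Lhat" and "1 \<le> d'" "d' \<le> d"
  shows "f d \<subseteq> f d'"
  using assms(3)
proof (induction d rule: dec_induct)
  case (step k)
  have "f (Suc k) \<subseteq> f k" using f \<open>1 \<le> d'\<close> step.hyps(1) unfolding Lhat_def by auto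
  with step.IH show ?case by blast
qed simp

context coheyting_algebra
begin

lemma Lhat_subset_iff_primes_containing:
  assumes f: "f \<in> Lhat" and q: "q \<in> Spec_fin" and d: "height q < d"
  shows "f d \<subseteq> (q::'a set) \<longleftrightarrow> q \<in> primes_containing f"
proof -
  define h where "h = Suc (height q)"
  have qS: "q \<in> Spec" using q unfolding Spec_fin_def by blast
  have "\<not> height_ge q h" "\<not> height_ge q d" using d height_ge_iff[OF q] unfolding h_def by auto
  obtain c where c: "f d = qrel (dL d) `` {c}" using Lhat_class[OF f] d by fastforce
  obtain c' where c': "f h = qrel (dL h) `` {c'}" using Lhat_class[OF f] unfolding h_def by fastforce
  have "c \<in> f h" using Lhat_antimono[OF f, of h d] d c qrel_dL_refl unfolding h_def by auto
  then have "c \<in> q \<longleftrightarrow> c' \<in> q" using qrel_dL_class_Spec_iff[OF qS \<open>\<not> height_ge q h\<close>] c' by blast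
  then show ?thesis
    using qrel_dL_class_subset_Spec_iff[OF qS] \<open>\<not> height_ge q h\<close> \<open>\<not> height_ge q d\<close> c c' q
    unfolding primes_containing_def h_def by auto
qed

lemma hle_iff_primes_containing:
  assumes f: "f \<in> Lhat" and g: "g \<in> Lhat"
  shows "hle f g \<longleftrightarrow> primes_containing f \<subseteq> (primes_containing g :: 'a set set)"
proof
  assume fg: "hle f g"
  show "primes_containing f \<subseteq> primes_containing g"
  proof
    fix q assume "q \<in> primes_containing f"
    then have q: "q \<in> Spec_fin" and fq: "f (Suc (height q)) \<subseteq> q" unfolding primes_containing_def by auto
    define d where "d = Suc (height q)"
    have qS: "q \<in> Spec" and qd: "\<not> height_ge q d"
      using q height_ge_iff[OF q] unfolding Spec_fin_def d_def by auto
    obtain c where c: "f d = qrel (dL d) `` {c}" using Lhat_class[OF f] unfolding d_def by fastforce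
    obtain c' where c': "g d = qrel (dL d) `` {c'}" using Lhat_class[OF g] unfolding d_def by fastforce
    have "(c, inf c c') \<in> qrel (dL d)"
      using fg c c' qrel_dL_refl unfolding hle_def d_def by simp
    moreover have "c \<in> q" using fq c qrel_dL_refl unfolding d_def by blast
    ultimately have "inf c c' \<in> q" using qrel_dL_iff qS qd by blast
    then have "g d \<subseteq> q" using c' qrel_dL_class_subset_Spec_iff[OF qS qd] Spec_inf_iff[OF qS] by simp
    with q show "q \<in> primes_containing g" unfolding primes_containing_def d_def by blast
  qed
next
  assume fg: "primes_containing f \<subseteq> primes_containing g"
  have "(a, inf a b) \<in> qrel (dL d)" if d: "1 \<le> d" and a: "a \<in> f d" and b: "b \<in> g d" for d a b
    unfolding qrel_dL_iff
  proof (intro ballI impI)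
    fix p :: "'a set" assume p: "p \<in> Spec" "\<not> height_ge p d"
    then have pF: "p \<in> Spec_fin" "height p < d" by (simp_all add: not_height_ge_iff)
    obtain c where c: "f d = qrel (dL d) `` {c}" using Lhat_class[OF f d] by blast
    obtain c' where c': "g d = qrel (dL d) `` {c'}" using Lhat_class[OF g d] by blast
    have "a \<in> p \<longleftrightarrow> f d \<subseteq> p"
      using qrel_dL_class_Spec_iff[OF p] qrel_dL_class_subset_Spec_iff[OF p] a c by blast
    moreover have "b \<in> p \<longleftrightarrow> g d \<subseteq> p"
      using qrel_dL_class_Spec_iff[OF p] qrel_dL_class_subset_Spec_iff[OF p] b c' by blast
    ultimately show "a \<in> p \<longleftrightarrow> inf a b \<in> p"
      using fg Lhat_subset_iff_primes_containing[OF _ pF] f g Spec_inf_iff[OF p(1)] by blast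
  qed
  then show "hle f g" unfolding hle_def by blast
qed

lemma hemb_in_Lhat: "hemb (a::'a) \<in> Lhat"
  unfolding Lhat_def
proof (intro CollectI conjI allI impI)
  fix d :: nat assume "1 \<le> d"
  then show "hemb a d \<in> UNIV // qrel (dL d)" unfolding hemb_def by (simp add: quotientI)
  show "hemb a (Suc d) \<subseteq> hemb a d" unfolding hemb_def using \<open>1 \<le> d\<close> qrel_dL_Suc by auto
qed (simp add: hemb_def)

lemma primes_containing_hemb: "primes_containing (hemb a) = {q \<in> Spec_fin. (a::'a) \<in> q}"
proof -
  have "hemb a (Suc (height q)) \<subseteq> q \<longleftrightarrow> a \<in> q" if q: "q \<in> Spec_fin" for q
    using qrel_dL_class_subset_Spec_iff[of q "Suc (height q)" a] height_ge_iff[OF q] q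
    unfolding hemb_def Spec_fin_def by simp
  then show ?thesis unfolding primes_containing_def by auto
qed

lemma Lhat_eqI:
  assumes f: "f \<in> Lhat" and g: "g \<in> Lhat" and "hle f g" "hle g (f :: nat \<Rightarrow> 'a set)"
  shows "f = g"
proof
  fix d
  show "f d = g d"
  proof (cases "d = 0")
    case True
    then show ?thesis using f g unfolding Lhat_def by simp
  next
    case False
    then have d: "1 \<le> d" by simp
    obtain c where c: "f d = qrel (dL d) `` {c}" using Lhat_class[OF f d] by blast
    obtain c' where c': "g d = qrel (dL d) `` {c'}" using Lhat_class[OF g d] by blast
    have "c \<in> f d" "c' \<in> g d" using c c' qrel_dL_refl by simp_all
    then have meets: "(c, inf c c') \<in> qrel (dL d)" "(c', inf c' c) \<in> qrel (dL d)"
      using assms(3,4) d unfolding hle_def by blast+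
    have same: "c \<in> p \<longleftrightarrow> c' \<in> p" if p: "p \<in> Spec" "\<not> height_ge p d" for p
    proof -
      have "c \<in> p \<longleftrightarrow> inf c c' \<in> p" "c' \<in> p \<longleftrightarrow> inf c' c \<in> p"
        using meets p unfolding qrel_dL_iff by blast+
      then show ?thesis using Spec_inf_iff[OF p(1)] by blast
    qed
    have "(c, v) \<in> qrel (dL d) \<longleftrightarrow> (c', v) \<in> qrel (dL d)" for v
      unfolding qrel_dL_iff using same by blast
    then have "qrel (dL d) `` {c} = qrel (dL d) `` {c'}" by blast
    with c c' show ?thesis by simp
  qed
qed

lemma primes_containing_inject:
  "f \<in> Lhat \<Longrightarrow> g \<in> Lhat \<Longrightarrow> primes_containing f = primes_containing g \<Longrightarrow> f = (g :: nat \<Rightarrow> 'a set)"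
  by (intro Lhat_eqI) (simp_all add: hle_iff_primes_containing)

lemma primes_containing_upward:
  assumes f: "f \<in> Lhat" and q: "q \<in> primes_containing f" and q': "q' \<in> Spec_fin" "q \<subseteq> (q'::'a set)"
  shows "q' \<in> primes_containing f"
proof -
  define d where "d = Suc (height q + height q')"
  have "q \<in> Spec_fin" using q unfolding primes_containing_def by blast
  then have "f d \<subseteq> q" using Lhat_subset_iff_primes_containing[OF f] q unfolding d_def by simp
  with q' show ?thesis using Lhat_subset_iff_primes_containing[OF f q'(1), of d] unfolding d_def by auto
qed

end

context precompact_hausdorff_coheyting
begin

lemma hle_hemb_if_not_hle_hemb:
  assumes a: "a \<in> Lhat" and g: "{g..} = - {..x}" "- {..x} \<in> (Spec_fin :: 'a set set)"
    and "\<not> hle a (hemb x)"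
  shows "hle (hemb g) a"
proof -
  have "\<not> primes_containing a \<subseteq> primes_containing (hemb x)"
    using assms(4) hle_iff_primes_containing[OF a hemb_in_Lhat] by blast
  then obtain p where p: "p \<in> primes_containing a" "x \<notin> p" and pF: "p \<in> Spec_fin"
    using primes_containing_subset unfolding primes_containing_hemb by blast
  then have "p \<subseteq> - {..x}" using Spec_subset_not_below_iff[of p x] unfolding Spec_fin_def by blast
  then have q: "- {..x} \<in> primes_containing a" by (rule primes_containing_upward[OF a p(1) g(2)])
  have "q' \<in> primes_containing a" if "q' \<in> primes_containing (hemb g)" for q'
  proof -
    from that have q': "q' \<in> Spec_fin" "g \<in> q'" unfolding primes_containing_hemb by auto
    then have "- {..x} \<subseteq> q'" using g Spec_atLeast_subset_iff[of q' g] unfolding Spec_fin_def by blast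
    then show ?thesis by (rule primes_containing_upward[OF a q q'(1)])
  qed
  then show ?thesis using hle_iff_primes_containing[OF hemb_in_Lhat a] by blast
qed

lemma hemb_in_cmi_Lhat:
  assumes x: "- {..x} \<in> (Spec_fin :: 'a set set)"
  shows "hemb x \<in> cmi Lhat hle"
proof -
  obtain g where g: "{g..} = - {..x}" using Spec_fin_eq_atLeast[OF x] by metis
  have "- {..x} \<in> primes_containing (hemb g)" "- {..x} \<notin> primes_containing (hemb x)"
    using x g unfolding primes_containing_hemb by auto
  then have not_below: "\<not> hle (hemb g) (hemb x)"
    using hle_iff_primes_containing[OF hemb_in_Lhat hemb_in_Lhat] by blast
  have "\<exists>a\<in>A. hle a (hemb x)" if A: "A \<subseteq> Lhat" "is_inf_in Lhat hle A m" "hle m (hemb x)" for A m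
  proof (rule ccontr)
    assume "\<not> ?thesis"
    with A(1) have "\<forall>a\<in>A. hle (hemb g) a" using hle_hemb_if_not_hle_hemb[OF _ g x] by blast
    then have "hle (hemb g) m" using A(2) hemb_in_Lhat unfolding is_inf_in_def by blast
    moreover have m: "m \<in> Lhat" using A(2) unfolding is_inf_in_def by blast
    ultimately have "primes_containing (hemb g) \<subseteq> primes_containing (hemb x)"
      using A(3) hle_iff_primes_containing[OF hemb_in_Lhat m] hle_iff_primes_containing[OF m hemb_in_Lhat]
      by blast
    with not_below show False using hle_iff_primes_containing[OF hemb_in_Lhat hemb_in_Lhat] by blast
  qed
  with not_below show ?thesis unfolding cmi_def using hemb_in_Lhat[of x] hemb_in_Lhat[of g] by blast
qed

lemma primes_containing_subset_hemb:
  assumes \<xi>: "\<xi> \<in> Lhat" and x: "- {..x} \<in> (Spec_fin :: 'a set set)" "- {..x} \<notin> primes_containing \<xi>"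
  shows "primes_containing \<xi> \<subseteq> primes_containing (hemb x)"
proof
  fix p assume p: "p \<in> primes_containing \<xi>"
  then have pF: "p \<in> Spec_fin" unfolding primes_containing_def by blast
  have "x \<in> p"
  proof (rule ccontr)
    assume "x \<notin> p"
    then have "p \<subseteq> - {..x}" using pF Spec_subset_not_below_iff unfolding Spec_fin_def by blast
    with x show False using primes_containing_upward[OF \<xi> p x(1)] by blast
  qed
  with pF show "p \<in> primes_containing (hemb x)" unfolding primes_containing_hemb by blast
qed

lemma is_inf_in_Lhat_hemb:
  assumes \<xi>: "\<xi> \<in> Lhat"
  shows "is_inf_in Lhat hle
    {hemb x |x. - {..x} \<in> (Spec_fin :: 'a set set) \<and> - {..x} \<notin> primes_containing \<xi>} \<xi>"
  unfolding is_inf_in_def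
proof (intro conjI ballI impI)
  fix a assume "a \<in> {hemb x |x. - {..x} \<in> (Spec_fin :: 'a set set) \<and> - {..x} \<notin> primes_containing \<xi>}"
  then show "hle \<xi> a"
    using primes_containing_subset_hemb[OF \<xi>] hle_iff_primes_containing[OF \<xi> hemb_in_Lhat] by blast
next
  fix z assume z: "z \<in> Lhat"
    and lower: "\<forall>a\<in>{hemb x |x. - {..x} \<in> (Spec_fin :: 'a set set) \<and> - {..x} \<notin> primes_containing \<xi>}. hle z a"
  have "p \<in> primes_containing \<xi>" if p: "p \<in> primes_containing z" for p
  proof (rule ccontr)
    assume p\<xi>: "p \<notin> primes_containing \<xi>"
    have pF: "p \<in> Spec_fin" using p unfolding primes_containing_def by blast
    then obtain x where x: "p = - {..x}" using Spec_fin_eq_not_below by blast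
    with lower pF p\<xi> have "hle z (hemb x)" by blast
    then have "p \<in> primes_containing (hemb x)" using p hle_iff_primes_containing[OF z hemb_in_Lhat] by blast
    with x show False unfolding primes_containing_hemb by simp
  qed
  then show "hle z \<xi>" using hle_iff_primes_containing[OF z \<xi>] by blast
qed (rule \<xi>)

lemma cmi_Lhat_obtain_hemb:
  assumes \<xi>: "\<xi> \<in> cmi Lhat hle"
  shows "\<exists>x. - {..x} \<in> (Spec_fin :: 'a set set) \<and> \<xi> = hemb x"
proof -
  define A where "A = {hemb x |x. - {..x} \<in> (Spec_fin :: 'a set set) \<and> - {..x} \<notin> primes_containing \<xi>}"
  have \<xi>L: "\<xi> \<in> Lhat" using \<xi> unfolding cmi_def by blast
  have "A \<subseteq> Lhat" unfolding A_def using hemb_in_Lhat by blast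
  moreover have "is_inf_in Lhat hle A \<xi>" unfolding A_def by (rule is_inf_in_Lhat_hemb[OF \<xi>L])
  moreover have "hle \<xi> \<xi>" using hle_iff_primes_containing[OF \<xi>L \<xi>L] by blast
  ultimately obtain x where x: "- {..x} \<in> Spec_fin" "- {..x} \<notin> primes_containing \<xi>"
    and "hle (hemb x) \<xi>"
    using \<xi> unfolding cmi_def A_def by blast
  then have "primes_containing (hemb x) \<subseteq> primes_containing \<xi>"
    using hle_iff_primes_containing[OF hemb_in_Lhat \<xi>L] by blast
  with primes_containing_subset_hemb[OF \<xi>L x] have "\<xi> = hemb x"
    using primes_containing_inject[OF \<xi>L hemb_in_Lhat] by blast
  with x show ?thesis by blast
qed

lemma cmi_Lhat_eq: "cmi Lhat hle = hemb ` cmi (UNIV :: 'a set) (\<le>)"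
  using cmi_Lhat_obtain_hemb hemb_in_cmi_Lhat cmi_iff by blast

end

theorem proposition6p7:
  fixes L :: "'a::{distrib_lattice,bounded_lattice} itself"
  assumes "coheyting L" and "precompact L" and "hausdorff L"
  defines "M \<equiv> cmi (UNIV::'a set) (\<le>)" and "J \<equiv> cji (UNIV::'a set) (\<le>)"
  shows
    "cmi Lhat hle = (hemb ` M :: (nat \<Rightarrow> 'a set) set)
     \<and> ((\<forall>x\<in>M. \<exists>m. is_inf_in UNIV (\<le>) {y. \<not> y \<le> x} m)
     \<and> (\<forall>x\<in>J. \<exists>m. is_sup_in UNIV (\<le>) {y. \<not> x \<le> y} m)
     \<and> bij_betw vee_map M J \<and> bij_betw wedge_map J M
     \<and> (\<forall>x\<in>M. wedge_map (vee_map x) = x) \<and> (\<forall>x\<in>J. vee_map (wedge_map x) = x)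
     \<and> (\<forall>x\<in>M. \<forall>y\<in>M. x \<le> y \<longrightarrow> vee_map x \<le> vee_map y)
     \<and> (\<forall>x\<in>J. \<forall>y\<in>J. x \<le> y \<longrightarrow> wedge_map x \<le> wedge_map y))
     \<and> (\<forall>x\<in>M. finite_cofoundation_rank M (<) x)
     \<and> \<not> (\<exists>f::nat \<Rightarrow> 'a. (\<forall>n. f n \<in> M) \<and> (\<forall>n. f n < f (Suc n)))
     \<and> (\<forall>a::'a. is_inf_in UNIV (\<le>) {x\<in>M. a \<le> x} a)"
proof -
  interpret precompact_hausdorff_coheyting L using assms(1-3) by unfold_locales
  have vee: "vee_map x \<in> J" "{vee_map x..} = - {..x}" if "x \<in> M" for x
    using vee_map_cmi that unfolding M_def J_def by blast+
  have wedge: "wedge_map g \<in> M" "{g..} = - {..wedge_map g}" if "g \<in> J" for g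
    using wedge_map_cji that unfolding M_def J_def by blast+
  have inverse: "\<forall>x\<in>M. wedge_map (vee_map x) = x" "\<forall>g\<in>J. vee_map (wedge_map g) = g"
    using wedge_map_eq[OF vee(2)] vee_map_eq[OF wedge(2)] by blast+
  have "bij_betw vee_map M J" "bij_betw wedge_map J M"
    using inverse vee(1) wedge(1) by (auto intro!: bij_betw_byWitness)
  moreover have "\<forall>x\<in>M. \<forall>y\<in>M. x \<le> y \<longrightarrow> vee_map x \<le> vee_map y"
    using splitting_le_iff[OF vee(2) vee(2)] by blast
  moreover have "\<forall>x\<in>J. \<forall>y\<in>J. x \<le> y \<longrightarrow> wedge_map x \<le> wedge_map y"
    using splitting_le_iff[OF wedge(2) wedge(2)] by blast
  moreover have "\<forall>x\<in>M. \<exists>m. is_inf_in UNIV (\<le>) {y. \<not> y \<le> x} m"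
    using is_inf_in_not_below[OF vee(2)] by blast
  moreover have "\<forall>g\<in>J. \<exists>m. is_sup_in UNIV (\<le>) {y. \<not> g \<le> y} m"
    using is_sup_in_not_above[OF wedge(2)] by blast
  moreover note inverse cmi_Lhat_eq[folded M_def] finite_cofoundation_rank_cmi[folded M_def]
    cmi_no_ascending_chain[folded M_def] is_inf_in_cmi_above[folded M_def]
  ultimately show ?thesis by (intro conjI) blast+
qed

end
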